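(* Let $T$ be a bounded linear operator on a complex Hilbert space, and suppose $T^k$ is quasiposinormal and $T^\ell$ is coquasiposinormal for some positive integers $k,\ell$. Then $T^m$ is both quasiposinormal and coquasiposinormal for every integer $m\ge m_0$, where $m_0=\operatorname{lcm}(k,\ell)$. Moreover: (a) if $\operatorname{dsc}(T)=1$, then $T$ is quasiposinormal; (b) if $\operatorname{asc}(T)=1$, then $T$ is coquasiposinormal.
   Context: $\mathcal{N}(A)$ and $\mathcal{R}(A)$ denote kernel and range. $A$ is quasiposinormal if $\mathcal{N}(A)\subseteq\mathcal{N}(A^* )$, and coquasiposinormal if $\mathcal{N}(A^* )\subseteq\mathcal{N}(A)$. The ascent $\operatorname{asc}(A)$ is the least integer $m\ge0$ with $\mathcal{N}(A^m)=\mathcal{N}(A^{m+1})$, and the descent $\operatorname{dsc}(A)$ is the least integer $m\ge0$ with $\mathcal{R}(A^{m+1})=\mathcal{R}(A^m)$ (when such integers exist). *)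

theory Defs
  imports "HOL-Analysis.Analysis"
begin

text \<open>Complex Hilbert spaces: a real Banach space (the underlying real normed
  structure) equipped with a complex scalar multiplication and a complex inner
  product (conjugate-linear in the first argument) inducing the norm.\<close>

class complex_hilbert = banach +
  fixes cscale :: "complex \<Rightarrow> 'a \<Rightarrow> 'a"
    and cinner :: "'a \<Rightarrow> 'a \<Rightarrow> complex"
  assumes cscale_of_real: "cscale (complex_of_real r) x = r *\<^sub>R x"
    and cscale_assoc: "cscale a (cscale b x) = cscale (a * b) x"
    and cscale_add_right: "cscale a (x + y) = cscale a x + cscale a y"
    and cscale_add_left: "cscale (a + b) x = cscale a x + cscale b x"
    and cinner_commute: "cinner x y = cnj (cinner y x)"
    and cinner_add_left: "cinner (x + y) z = cinner x z + cinner y z"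
    and cinner_cscale_left: "cinner (cscale a x) y = cnj a * cinner x y"
    and cinner_self_norm: "cinner x x = complex_of_real ((norm x)\<^sup>2)"

definition bounded_clinear_op :: "('a::complex_hilbert \<Rightarrow> 'a) \<Rightarrow> bool" where
  "bounded_clinear_op T \<longleftrightarrow> bounded_linear T \<and> (\<forall>c x. T (cscale c x) = cscale c (T x))"

definition is_hadjoint :: "('a::complex_hilbert \<Rightarrow> 'a) \<Rightarrow> ('a \<Rightarrow> 'a) \<Rightarrow> bool" where
  "is_hadjoint T S \<longleftrightarrow> (\<forall>x y. cinner (T x) y = cinner x (S y))"

definition hadjoint :: "('a::complex_hilbert \<Rightarrow> 'a) \<Rightarrow> ('a \<Rightarrow> 'a)" where
  "hadjoint T = (SOME S. is_hadjoint T S)"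

definition op_kernel :: "('a::complex_hilbert \<Rightarrow> 'a) \<Rightarrow> 'a set" where
  "op_kernel T = {x. T x = 0}"

definition op_range :: "('a::complex_hilbert \<Rightarrow> 'a) \<Rightarrow> 'a set" where
  "op_range T = range T"

definition quasiposinormal :: "('a::complex_hilbert \<Rightarrow> 'a) \<Rightarrow> bool" where
  "quasiposinormal A \<longleftrightarrow> op_kernel A \<subseteq> op_kernel (hadjoint A)"

definition coquasiposinormal :: "('a::complex_hilbert \<Rightarrow> 'a) \<Rightarrow> bool" where
  "coquasiposinormal A \<longleftrightarrow> op_kernel (hadjoint A) \<subseteq> op_kernel A"

definition ascent :: "('a::complex_hilbert \<Rightarrow> 'a) \<Rightarrow> nat option" where
  "ascent A = (if \<exists>m. op_kernel (A ^^ m) = op_kernel (A ^^ Suc m)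
     then Some (LEAST m. op_kernel (A ^^ m) = op_kernel (A ^^ Suc m)) else None)"

definition descent :: "('a::complex_hilbert \<Rightarrow> 'a) \<Rightarrow> nat option" where
  "descent A = (if \<exists>m. op_range (A ^^ Suc m) = op_range (A ^^ m)
     then Some (LEAST m. op_range (A ^^ Suc m) = op_range (A ^^ m)) else None)"

end

theory Submission
  imports Defs
begin

text \<open>
  The kernel of an adjoint is the orthogonal complement of the range: \<open>\<N>(A\<^sup>*) = \<R>(A)\<^sup>\<bottom>\<close>.
  Hence a quasiposinormal \<open>A\<close> has ascent at most one: if \<open>A\<^sup>2 x = 0\<close> then
  \<open>A x \<in> \<N>(A) \<subseteq> \<N>(A\<^sup>*)\<close> is orthogonal to \<open>\<R>(A) \<ni> A x\<close>, so \<open>A x = 0\<close>.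
  For \<open>A = T\<^sup>k\<close> this makes the kernels \<open>\<N>(T\<^sup>m)\<close> stabilise at \<open>\<N>(T\<^sup>k)\<close> for \<open>m \<ge> k\<close>,
  while \<open>\<N>((T\<^sup>*)\<^sup>k) \<subseteq> \<N>((T\<^sup>*)\<^sup>m)\<close>; so \<open>T\<^sup>m\<close> is quasiposinormal for all \<open>m \<ge> k\<close>, and by
  the same argument for \<open>T\<^sup>*\<close> coquasiposinormal for all \<open>m \<ge> l\<close>.
  If \<open>dsc(T) = 1\<close> then \<open>\<R>(T\<^sup>k) = \<R>(T)\<close>, so \<open>\<N>(T) \<subseteq> \<N>(T\<^sup>k) \<subseteq> \<N>((T\<^sup>*)\<^sup>k) = \<N>(T\<^sup>*)\<close>;
  if \<open>asc(T) = 1\<close> then \<open>\<N>(T\<^sup>l) = \<N>(T)\<close>, so \<open>\<N>(T\<^sup>*) \<subseteq> \<N>((T\<^sup>*)\<^sup>l) \<subseteq> \<N>(T\<^sup>l) = \<N>(T)\<close>.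

  The adjoint of a bounded operator is obtained from the Riesz representation theorem, whose
  representing vector is a rescaling of the element of least norm in the closed affine
  hyperplane \<open>g = 1\<close>.
\<close>

section \<open>Inner products\<close>

lemma cinner_zero_left [simp]: "cinner (0::'a::complex_hilbert) y = 0"
  using cinner_add_left[of "0::'a" 0 y] by simp

lemma cinner_zero_right [simp]: "cinner (x::'a::complex_hilbert) 0 = 0"
  by (metis cinner_commute cinner_zero_left complex_cnj_zero)

lemma cinner_add_right: "cinner (x::'a::complex_hilbert) (y + z) = cinner x y + cinner x z"
  by (metis cinner_add_left cinner_commute complex_cnj_add)

lemma cinner_minus_left: "cinner (- x::'a::complex_hilbert) y = - cinner x y"
  using cinner_add_left[of "- x" x y] by (simp add: eq_neg_iff_add_eq_0)

lemma cinner_minus_right: "cinner (x::'a::complex_hilbert) (- y) = - cinner x y"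
  by (metis cinner_minus_left cinner_commute complex_cnj_minus)

lemma cinner_diff_left: "cinner (x - z::'a::complex_hilbert) y = cinner x y - cinner z y"
  using cinner_add_left[of x "- z" y] by (simp add: cinner_minus_left)

lemma cinner_diff_right: "cinner (x::'a::complex_hilbert) (y - z) = cinner x y - cinner x z"
  by (metis cinner_diff_left cinner_commute complex_cnj_diff)

lemma cinner_cscale_right: "cinner (x::'a::complex_hilbert) (cscale a y) = a * cinner x y"
  by (metis cinner_cscale_left cinner_commute complex_cnj_cnj complex_cnj_mult)

lemma cinner_scaleR_left: "cinner (r *\<^sub>R x::'a::complex_hilbert) y = of_real r * cinner x y"
  by (metis cinner_cscale_left cscale_of_real complex_cnj_complex_of_real)

lemma cinner_scaleR_right: "cinner (x::'a::complex_hilbert) (r *\<^sub>R y) = of_real r * cinner x y"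
  by (metis cinner_cscale_right cscale_of_real)

lemma cinner_self_eq_0 [simp]: "cinner (x::'a::complex_hilbert) x = 0 \<longleftrightarrow> x = 0"
  by (simp add: cinner_self_norm)

lemma Re_cinner_commute: "Re (cinner (x::'a::complex_hilbert) y) = Re (cinner y x)"
  by (subst cinner_commute) simp

lemma norm_add_sq_eq:
  "(norm (x + y::'a::complex_hilbert))\<^sup>2 = (norm x)\<^sup>2 + 2 * Re (cinner x y) + (norm y)\<^sup>2"
proof -
  have "cinner (x + y) (x + y) = cinner x x + cinner x y + cinner y x + cinner y y"
    by (simp add: cinner_add_left cinner_add_right)
  from arg_cong[where f = Re, OF this] show ?thesis
    by (simp add: cinner_self_norm Re_cinner_commute[of y x])
qed

lemma norm_diff_sq_eq:
  "(norm (x - y::'a::complex_hilbert))\<^sup>2 = (norm x)\<^sup>2 - 2 * Re (cinner x y) + (norm y)\<^sup>2"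
  using norm_add_sq_eq[of x "- y"] by (simp add: cinner_minus_right)

lemma parallelogram_law:
  "(norm (x + y::'a::complex_hilbert))\<^sup>2 + (norm (x - y))\<^sup>2 = 2 * (norm x)\<^sup>2 + 2 * (norm y)\<^sup>2"
  by (simp add: norm_add_sq_eq norm_diff_sq_eq)

lemma cinner_polarization:
  fixes a b :: "'a::complex_hilbert"
  shows "cinner a b = of_real (((norm (a + b))\<^sup>2 - (norm (a - b))\<^sup>2) / 4)
    + \<i> * of_real (((norm (cscale \<i> a + b))\<^sup>2 - (norm (cscale \<i> a - b))\<^sup>2) / 4)"
  by (simp add: complex_eq_iff norm_add_sq_eq norm_diff_sq_eq cinner_cscale_left)

lemma continuous_on_cinner_right: "continuous_on UNIV (cinner (a::'a::complex_hilbert))"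
  unfolding cinner_polarization[abs_def] by (intro continuous_intros; simp)

lemma norm_diff_sq_le_if_midpoint_norm_ge:
  fixes x y :: "'a::complex_hilbert"
  assumes "d \<le> (norm ((1/2) *\<^sub>R (x + y)))\<^sup>2"
  shows "(norm (x - y))\<^sup>2 \<le> 2 * ((norm x)\<^sup>2 - d) + 2 * ((norm y)\<^sup>2 - d)"
proof -
  have "4 * (norm ((1/2) *\<^sub>R (x + y)))\<^sup>2 = (norm (x + y))\<^sup>2"
    by (simp add: power2_eq_square)
  with assms parallelogram_law[of x y] show ?thesis by (smt (verit))
qed

section \<open>The Riesz representation theorem\<close>

lemma Cauchy_if_dist_le_null:
  fixes X :: "nat \<Rightarrow> 'b::metric_space"
  assumes dist: "\<And>m n. dist (X m) (X n) \<le> e m + e n" and "e \<longlonglongrightarrow> 0"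
  shows "Cauchy X"
proof (rule metric_CauchyI)
  fix r :: real
  assume "0 < r"
  then obtain N where N: "\<And>n. n \<ge> N \<Longrightarrow> norm (e n - 0) < r / 2"
    using LIMSEQ_D[OF \<open>e \<longlonglongrightarrow> 0\<close>, of "r / 2"] by auto
  have "dist (X m) (X n) < r" if "m \<ge> N" "n \<ge> N" for m n
    using dist[of m n] N[OF that(1)] N[OF that(2)] by simp
  then show "\<exists>M. \<forall>m\<ge>M. \<forall>n\<ge>M. dist (X m) (X n) < r"
    by blast
qed

lemma Cauchy_if_norm_sq_minimizing:
  fixes X :: "nat \<Rightarrow> 'a::complex_hilbert"
  assumes mid: "\<And>m n. d \<le> (norm ((1/2) *\<^sub>R (X m + X n)))\<^sup>2"
    and X: "\<And>n. (norm (X n))\<^sup>2 < d + 1 / Suc n"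
  shows "Cauchy X"
proof (rule Cauchy_if_dist_le_null)
  define e where "e n = sqrt (2 / Suc n)" for n
  show "dist (X m) (X n) \<le> e m + e n" for m n
  proof -
    have "(norm (X m - X n))\<^sup>2 \<le> 2 * ((norm (X m))\<^sup>2 - d) + 2 * ((norm (X n))\<^sup>2 - d)"
      using mid by (rule norm_diff_sq_le_if_midpoint_norm_ge)
    also have "\<dots> \<le> 2 / Suc m + 2 / Suc n"
      using X[of m] X[of n] by (simp add: divide_inverse)
    finally have "norm (X m - X n) \<le> sqrt (2 / Suc m + 2 / Suc n)"
      by (simp add: real_le_rsqrt)
    also have "\<dots> \<le> e m + e n"
      unfolding e_def by (rule sqrt_add_le_add_sqrt) simp_all
    finally show ?thesis by (simp add: dist_norm)
  qed
  have "(\<lambda>n. 2 / real (Suc n)) \<longlonglongrightarrow> 0"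
    by (rule LIMSEQ_Suc[OF lim_const_over_n])
  from tendsto_real_sqrt[OF this] show "e \<longlonglongrightarrow> 0"
    by (simp add: e_def[abs_def])
qed

lemma ex_norm_minimal:
  fixes A :: "'a::complex_hilbert set"
  assumes "closed A" "A \<noteq> {}"
    and midpoint: "\<And>x y. x \<in> A \<Longrightarrow> y \<in> A \<Longrightarrow> (1/2) *\<^sub>R (x + y) \<in> A"
  shows "\<exists>w\<in>A. \<forall>x\<in>A. norm w \<le> norm x"
proof -
  define d where "d = Inf ((\<lambda>x. (norm x)\<^sup>2) ` A)"
  have d_le: "d \<le> (norm x)\<^sup>2" if "x \<in> A" for x
    unfolding d_def using that by (intro cInf_lower bdd_belowI[of _ 0]) auto
  have "\<exists>x\<in>A. (norm x)\<^sup>2 < d + 1 / Suc n" for n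
    using cInf_lessD[of "(\<lambda>x. (norm x)\<^sup>2) ` A" "d + 1 / Suc n"] \<open>A \<noteq> {}\<close>
    by (auto simp: d_def)
  then obtain X where X: "\<And>n. X n \<in> A" "\<And>n. (norm (X n))\<^sup>2 < d + 1 / Suc n"
    by metis
  have "Cauchy X"
    using d_le midpoint X by (intro Cauchy_if_norm_sq_minimizing) blast+
  then obtain w where w: "X \<longlonglongrightarrow> w"
    using Cauchy_convergent_iff convergent_def by blast
  have "w \<in> A"
    using \<open>closed A\<close> X(1) w closed_sequentially by blast
  have "(\<lambda>n. (norm (X n))\<^sup>2) \<longlonglongrightarrow> (norm w)\<^sup>2"
    using w by (intro tendsto_intros)
  moreover have "(\<lambda>n. d + 1 / Suc n) \<longlonglongrightarrow> d"
    using LIMSEQ_Suc[OF lim_const_over_n[of 1]] by (auto intro: tendsto_eq_intros)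
  ultimately have "(norm w)\<^sup>2 \<le> d"
    using X(2) by (intro LIMSEQ_le) (auto intro: less_imp_le)
  with \<open>w \<in> A\<close> d_le show ?thesis
    by (meson order_trans power2_le_imp_le norm_ge_zero)
qed

lemma quadratic_nonneg_imp_linear_coeff_eq_0:
  fixes a c :: real
  assumes "0 \<le> a" and nonneg: "\<And>t. 0 \<le> 2 * t * c + t\<^sup>2 * a"
  shows "c = 0"
proof -
  define t where "t = - c / (a + 1)"
  have "(a + 1)\<^sup>2 * (2 * t * c + t\<^sup>2 * a) = - c\<^sup>2 * (a + 2)"
    using \<open>0 \<le> a\<close> by (simp add: t_def power2_eq_square divide_simps) algebra
  moreover have "0 \<le> (a + 1)\<^sup>2 * (2 * t * c + t\<^sup>2 * a)"
    using nonneg by simp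
  ultimately have "c\<^sup>2 * (a + 2) \<le> 0"
    by simp
  with \<open>0 \<le> a\<close> show ?thesis
    by (simp add: mult_le_0_iff)
qed

lemma Re_cinner_eq_0_if_norm_minimal:
  fixes w k :: "'a::complex_hilbert"
  assumes "\<And>t::real. norm w \<le> norm (w + t *\<^sub>R k)"
  shows "Re (cinner w k) = 0"
proof (rule quadratic_nonneg_imp_linear_coeff_eq_0[of "(norm k)\<^sup>2"])
  fix t :: real
  have "(norm w)\<^sup>2 \<le> (norm (w + t *\<^sub>R k))\<^sup>2"
    using assms[of t] by (simp add: power_mono)
  then show "0 \<le> 2 * t * Re (cinner w k) + t\<^sup>2 * (norm k)\<^sup>2"
    by (simp add: norm_add_sq_eq cinner_scaleR_right power_mult_distrib)
qed simp

lemma riesz_representation: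
  fixes g :: "'a::complex_hilbert \<Rightarrow> complex"
  assumes add: "\<And>x y. g (x + y) = g x + g y"
    and scale: "\<And>c x. g (cscale c x) = c * g x"
    and "continuous_on UNIV g"
  shows "\<exists>z. \<forall>x. g x = cinner z x"
proof (cases "\<forall>x. g x = 0")
  case True
  then show ?thesis by (auto intro: exI[of _ 0])
next
  case False
  then obtain v where "g v \<noteq> 0" by blast
  have scaleR: "g (r *\<^sub>R x) = of_real r * g x" for r x
    using scale[of "of_real r" x] by (simp add: cscale_of_real)
  have "closed (g -` {1})"
    using \<open>continuous_on UNIV g\<close> by (simp add: closed_vimage)
  moreover have "cscale (1 / g v) v \<in> g -` {1}"
    using \<open>g v \<noteq> 0\<close> by (simp add: scale)
  moreover have "(1/2) *\<^sub>R (x + y) \<in> g -` {1}" if "x \<in> g -` {1}" "y \<in> g -` {1}" for x y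
    using that by (simp add: scaleR add)
  ultimately obtain w where "g w = 1" and w_min: "\<And>x. g x = 1 \<Longrightarrow> norm w \<le> norm x"
    using ex_norm_minimal[of "g -` {1}"] by blast
  have orth: "cinner w k = 0" if "g k = 0" for k
  proof -
    have Re0: "Re (cinner w u) = 0" if "g u = 0" for u
      using that \<open>g w = 1\<close> by (intro Re_cinner_eq_0_if_norm_minimal w_min) (simp add: add scaleR)
    from Re0[of "cscale \<i> k"] have "Im (cinner w k) = 0"
      using \<open>g k = 0\<close> by (simp add: scale cinner_cscale_right)
    with Re0[OF \<open>g k = 0\<close>] show ?thesis
      by (simp add: complex_eq_iff)
  qed
  have "w \<noteq> 0"
    using \<open>g w = 1\<close> scaleR[of 0 w] by auto
  have "g x = cinner ((1 / (norm w)\<^sup>2) *\<^sub>R w) x" for x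
  proof -
    have "g (x - cscale (g x) w) = 0"
      using add[of "x - cscale (g x) w" "cscale (g x) w"] \<open>g w = 1\<close> by (simp add: scale)
    then have "cinner w (x - cscale (g x) w) = 0"
      by (rule orth)
    then have "cinner w x = g x * of_real ((norm w)\<^sup>2)"
      by (simp add: cinner_diff_right cinner_cscale_right cinner_self_norm)
    with \<open>w \<noteq> 0\<close> show ?thesis
      by (simp add: cinner_scaleR_left)
  qed
  then show ?thesis by blast
qed

section \<open>Adjoints\<close>

lemma ex_hadjoint:
  fixes T :: "'a::complex_hilbert \<Rightarrow> 'a"
  assumes "bounded_clinear_op T"
  shows "\<exists>S. is_hadjoint T S"
proof -
  have lin: "bounded_linear T" and clin: "\<And>c x. T (cscale c x) = cscale c (T x)"
    using assms unfolding bounded_clinear_op_def by auto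
  have "\<exists>z. \<forall>x. cinner y (T x) = cinner z x" for y
  proof (rule riesz_representation)
    show "cinner y (T (x + z)) = cinner y (T x) + cinner y (T z)" for x z
      using lin by (simp add: linear_simps cinner_add_right)
    show "cinner y (T (cscale c x)) = c * cinner y (T x)" for c x
      by (simp add: clin cinner_cscale_right)
    show "continuous_on UNIV (\<lambda>x. cinner y (T x))"
      using continuous_on_compose2[OF continuous_on_cinner_right linear_continuous_on[OF lin]]
      by simp
  qed
  then obtain S where "\<And>x y. cinner y (T x) = cinner (S y) x"
    by metis
  then have "is_hadjoint T S"
    unfolding is_hadjoint_def by (metis cinner_commute)
  then show ?thesis by blast
qed

lemma is_hadjoint_unique: "is_hadjoint T S \<Longrightarrow> is_hadjoint T S' \<Longrightarrow> S = S'"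
proof
  fix y
  assume "is_hadjoint T S" "is_hadjoint T S'"
  then have "cinner x (S y - S' y) = 0" for x
    unfolding is_hadjoint_def by (simp add: cinner_diff_right)
  from this[of "S y - S' y"] show "S y = S' y" by simp
qed

lemma hadjoint_eqI: "is_hadjoint T S \<Longrightarrow> hadjoint T = S"
  unfolding hadjoint_def by (metis someI is_hadjoint_unique)

lemma is_hadjoint_hadjoint: "bounded_clinear_op T \<Longrightarrow> is_hadjoint T (hadjoint T)"
  using ex_hadjoint hadjoint_eqI by metis

lemma is_hadjoint_commute: "is_hadjoint T S \<Longrightarrow> is_hadjoint S T"
  unfolding is_hadjoint_def by (metis cinner_commute)

lemma is_hadjoint_funpow: "is_hadjoint T S \<Longrightarrow> is_hadjoint (T ^^ n) (S ^^ n)"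
proof (induction n)
  case 0
  then show ?case by (simp add: is_hadjoint_def)
next
  case (Suc n)
  then show ?case
    unfolding is_hadjoint_def by (simp add: funpow_swap1)
qed

lemma hadjoint_funpow: "bounded_clinear_op T \<Longrightarrow> hadjoint (T ^^ n) = hadjoint T ^^ n"
  by (intro hadjoint_eqI is_hadjoint_funpow is_hadjoint_hadjoint)

lemma is_hadjoint_kernel_iff: "is_hadjoint A B \<Longrightarrow> B x = 0 \<longleftrightarrow> (\<forall>y. cinner (A y) x = 0)"
  unfolding is_hadjoint_def by (metis cinner_self_eq_0 cinner_zero_right)

lemma is_hadjoint_zero: "is_hadjoint A B \<Longrightarrow> B 0 = 0"
  by (simp add: is_hadjoint_kernel_iff)

lemma is_hadjoint_kernel_antimono:
  assumes "is_hadjoint A B" "is_hadjoint A' B'" "range A \<subseteq> range A'"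
  shows "op_kernel B' \<subseteq> op_kernel B"
proof
  fix x
  assume "x \<in> op_kernel B'"
  then have "cinner (A' z) x = 0" for z
    using assms(2) by (simp add: op_kernel_def is_hadjoint_kernel_iff)
  moreover have "\<exists>z. A y = A' z" for y
    using assms(3) by blast
  ultimately have "cinner (A y) x = 0" for y
    by metis
  then show "x \<in> op_kernel B"
    using assms(1) by (simp add: op_kernel_def is_hadjoint_kernel_iff)
qed

section \<open>Kernels and ranges of powers\<close>

lemma kernel_square_subset_if_kernel_subset_adjoint:
  assumes "is_hadjoint A B" "op_kernel A \<subseteq> op_kernel B" "A (A x) = 0"
  shows "A x = 0"
proof -
  have "B (A x) = 0"
    using assms(2,3) by (auto simp: op_kernel_def)
  then have "cinner (A x) (A x) = 0"
    using assms(1) by (simp add: is_hadjoint_kernel_iff)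
  then show ?thesis by simp
qed

lemma funpow_kernel_mono:
  fixes P :: "'b::zero \<Rightarrow> 'b"
  assumes "P 0 = 0" "i \<le> j" "(P ^^ i) x = 0"
  shows "(P ^^ j) x = 0"
proof -
  obtain d where "j = d + i"
    using assms(2) by (metis add.commute le_add_diff_inverse)
  have "(P ^^ d) 0 = 0"
    using assms(1) by (induction d) auto
  then show ?thesis
    using assms(3) \<open>j = d + i\<close> by (simp add: funpow_add)
qed

lemma funpow_kernel_stable:
  fixes P :: "'b::zero \<Rightarrow> 'b"
  assumes "(P ^^ (n + d)) x = 0"
    and stable: "\<And>x. (P ^^ Suc n) x = 0 \<Longrightarrow> (P ^^ n) x = 0"
  shows "(P ^^ n) x = 0"
  using assms(1)
proof (induction d arbitrary: x)
  case (Suc d)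
  then have "(P ^^ (n + d)) (P x) = 0"
    by (simp only: add_Suc_right funpow_Suc_right comp_apply)
  then have "(P ^^ Suc n) x = 0"
    using Suc.IH by (simp only: funpow_Suc_right comp_apply)
  then show ?case by (rule stable)
qed simp

lemma funpow_range_stable:
  fixes P :: "'b \<Rightarrow> 'b"
  assumes "range (P ^^ Suc n) = range (P ^^ n)" "n \<le> m"
  shows "range (P ^^ m) = range (P ^^ n)"
  using assms(2)
proof (induction m rule: dec_induct)
  case (step m)
  have "range (P ^^ Suc m) = P ` range (P ^^ m)"
    by (simp add: image_comp)
  also have "\<dots> = range (P ^^ Suc n)"
    by (simp add: step.IH image_comp)
  finally show ?case
    using assms(1) by simp
qed simp

lemma ascent_SomeD:
  assumes "ascent A = Some n"
  shows "op_kernel (A ^^ n) = op_kernel (A ^^ Suc n)"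
proof -
  let ?P = "\<lambda>m. op_kernel (A ^^ m) = op_kernel (A ^^ Suc m)"
  from assms have ex: "\<exists>m. ?P m" and n: "n = (LEAST m. ?P m)"
    unfolding ascent_def by (auto split: if_splits)
  show ?thesis
    unfolding n by (rule LeastI_ex[OF ex])
qed

lemma descent_SomeD:
  assumes "descent A = Some n"
  shows "op_range (A ^^ Suc n) = op_range (A ^^ n)"
proof -
  let ?P = "\<lambda>m. op_range (A ^^ Suc m) = op_range (A ^^ m)"
  from assms have ex: "\<exists>m. ?P m" and n: "n = (LEAST m. ?P m)"
    unfolding descent_def by (auto split: if_splits)
  show ?thesis
    unfolding n by (rule LeastI_ex[OF ex])
qed

lemma kernel_subset_adjoint_funpow_mono:
  assumes adj: "is_hadjoint A B" and "0 < k" "k \<le> m"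
    and sub: "op_kernel (A ^^ k) \<subseteq> op_kernel (B ^^ k)"
  shows "op_kernel (A ^^ m) \<subseteq> op_kernel (B ^^ m)"
proof
  have "A 0 = 0" "B 0 = 0"
    using adj is_hadjoint_commute is_hadjoint_zero by blast+
  have stable: "(A ^^ k) x = 0" if "(A ^^ Suc k) x = 0" for x
  proof (rule kernel_square_subset_if_kernel_subset_adjoint[OF is_hadjoint_funpow[OF adj] sub])
    have "(A ^^ (k + k)) x = 0"
      using funpow_kernel_mono[where P = A, OF \<open>A 0 = 0\<close> _ that] \<open>0 < k\<close> by simp
    then show "(A ^^ k) ((A ^^ k) x) = 0"
      by (simp add: funpow_add)
  qed
  fix x
  assume "x \<in> op_kernel (A ^^ m)"
  then have "(A ^^ (k + (m - k))) x = 0"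
    using \<open>k \<le> m\<close> by (simp add: op_kernel_def)
  then have "(A ^^ k) x = 0"
    by (rule funpow_kernel_stable) (fact stable)
  then have "(B ^^ k) x = 0"
    using sub by (auto simp: op_kernel_def)
  then show "x \<in> op_kernel (B ^^ m)"
    using funpow_kernel_mono[where P = B, OF \<open>B 0 = 0\<close> \<open>k \<le> m\<close>] by (simp add: op_kernel_def)
qed

lemma quasiposinormal_funpow_mono:
  assumes "bounded_clinear_op T" "0 < k" "k \<le> m" "quasiposinormal (T ^^ k)"
  shows "quasiposinormal (T ^^ m)"
  using assms kernel_subset_adjoint_funpow_mono[OF is_hadjoint_hadjoint[OF assms(1)]]
  unfolding quasiposinormal_def hadjoint_funpow[OF assms(1)] by blast

lemma coquasiposinormal_funpow_mono:
  assumes "bounded_clinear_op T" "0 < k" "k \<le> m" "coquasiposinormal (T ^^ k)"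
  shows "coquasiposinormal (T ^^ m)"
  using assms kernel_subset_adjoint_funpow_mono[OF is_hadjoint_commute[OF is_hadjoint_hadjoint[OF assms(1)]]]
  unfolding coquasiposinormal_def hadjoint_funpow[OF assms(1)] by blast

lemma quasiposinormal_if_descent_eq_1:
  assumes T: "bounded_clinear_op T" and "0 < k" "quasiposinormal (T ^^ k)" "descent T = Some 1"
  shows "quasiposinormal T"
proof -
  have adj: "is_hadjoint T (hadjoint T)"
    using T by (rule is_hadjoint_hadjoint)
  have "range (T ^^ k) = range (T ^^ 1)"
    using descent_SomeD[OF assms(4)] unfolding op_range_def
    by (rule funpow_range_stable) (use \<open>0 < k\<close> in simp)
  then have "range T \<subseteq> range (T ^^ k)"
    by simp
  then have "op_kernel (hadjoint T ^^ k) \<subseteq> op_kernel (hadjoint T)"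
    by (rule is_hadjoint_kernel_antimono[OF adj is_hadjoint_funpow[OF adj]])
  moreover have "op_kernel T \<subseteq> op_kernel (T ^^ k)"
    using funpow_kernel_mono[where P = T and i = 1 and j = k]
      is_hadjoint_zero[OF is_hadjoint_commute[OF adj]] \<open>0 < k\<close>
    by (auto simp: op_kernel_def)
  ultimately show ?thesis
    using assms(3) unfolding quasiposinormal_def hadjoint_funpow[OF T] by blast
qed

lemma coquasiposinormal_if_ascent_eq_1:
  assumes T: "bounded_clinear_op T" and "0 < l" "coquasiposinormal (T ^^ l)" "ascent T = Some 1"
  shows "coquasiposinormal T"
proof -
  have adj: "is_hadjoint T (hadjoint T)"
    using T by (rule is_hadjoint_hadjoint)
  have stable: "(T ^^ 1) x = 0" if "(T ^^ Suc 1) x = 0" for x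
  proof -
    have "x \<in> op_kernel (T ^^ Suc 1)"
      using that by (simp only: op_kernel_def mem_Collect_eq)
    then show ?thesis
      unfolding ascent_SomeD[OF assms(4), symmetric] by (simp only: op_kernel_def mem_Collect_eq)
  qed
  have "op_kernel (T ^^ l) \<subseteq> op_kernel T"
  proof
    fix x
    assume "x \<in> op_kernel (T ^^ l)"
    then have "(T ^^ (1 + (l - 1))) x = 0"
      using \<open>0 < l\<close> by (simp add: op_kernel_def)
    then have "(T ^^ 1) x = 0"
      by (rule funpow_kernel_stable) (fact stable)
    then show "x \<in> op_kernel T"
      by (simp add: op_kernel_def)
  qed
  moreover have "op_kernel (hadjoint T) \<subseteq> op_kernel (hadjoint T ^^ l)"
    using funpow_kernel_mono[where P = "hadjoint T" and i = 1 and j = l] is_hadjoint_zero[OF adj] \<open>0 < l\<close>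
    by (auto simp: op_kernel_def)
  ultimately show ?thesis
    using assms(3) unfolding coquasiposinormal_def hadjoint_funpow[OF T] by blast
qed

theorem theorem5p8:
  fixes T :: "'a::complex_hilbert \<Rightarrow> 'a" and k l :: nat
  assumes "bounded_clinear_op T"
    and "k > 0" and "l > 0"
    and "quasiposinormal (T ^^ k)"
    and "coquasiposinormal (T ^^ l)"
  shows "(\<forall>m \<ge> lcm k l. quasiposinormal (T ^^ m) \<and> coquasiposinormal (T ^^ m))
    \<and> (descent T = Some 1 \<longrightarrow> quasiposinormal T)
    \<and> (ascent T = Some 1 \<longrightarrow> coquasiposinormal T)"
proof -
  have "quasiposinormal (T ^^ m) \<and> coquasiposinormal (T ^^ m)" if "lcm k l \<le> m" for m
  proof -
    have "k \<le> lcm k l" "l \<le> lcm k l"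
      using assms(2,3) by (simp_all add: dvd_imp_le lcm_pos_nat)
    with that have "k \<le> m" "l \<le> m"
      by simp_all
    then show ?thesis
      using quasiposinormal_funpow_mono[OF assms(1,2) \<open>k \<le> m\<close> assms(4)]
        coquasiposinormal_funpow_mono[OF assms(1,3) \<open>l \<le> m\<close> assms(5)] by blast
  qed
  moreover have "descent T = Some 1 \<longrightarrow> quasiposinormal T"
    using quasiposinormal_if_descent_eq_1[OF assms(1,2,4)] by blast
  moreover have "ascent T = Some 1 \<longrightarrow> coquasiposinormal T"
    using coquasiposinormal_if_ascent_eq_1[OF assms(1,3,5)] by blast
  ultimately show ?thesis
    by blast
qed

end
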